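(* Let $d \ge 1$ be an integer, let $X_0, X_1, \dots$ be independent random variables each taking values $0$ and $1$ with probability $1/2$ each, and let $$P_d = P\Big(\exists N > 0 : \sum_{k=0}^{N-1} X_k < \tfrac{1}{d} N\Big).$$ Then $P_1 = P_2 = 1$, and for $d > 2$ the polynomial $g_d(z) = z^d - 2z + 1$ has exactly one root in the open unit disk, this root is real and lies in $(1/2,1)$, and $P_d$ equals this root. *)

theory Defs
  imports "HOL-Probability.Probability"
begin

definition ruin_event :: "'a measure \<Rightarrow> (nat \<Rightarrow> 'a \<Rightarrow> nat) \<Rightarrow> nat \<Rightarrow> 'a set" where
  "ruin_event M X d = {\<omega> \<in> space M. \<exists>N>0. real (\<Sum>k<N. X k \<omega>) < real N / real d}"

end

theory Submission
  imports Defs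
begin

text \<open>
  With \<open>S\<^sub>N\<close> the number of ones among the first \<open>N\<close> flips, \<open>d S\<^sub>N < N\<close> says that the walk
  \<open>1 + d S\<^sub>N - N\<close>, which starts at level 1, steps down by 1 on a zero and up by \<open>d - 1\<close> on a
  one, has reached level 0. Let \<open>h\<^sub>n(k)\<close> be the probability of reaching 0 from level \<open>k\<close>
  within \<open>n\<close> steps; independence gives \<open>h\<^sub>n\<^sub>+\<^sub>1(k+1) = (h\<^sub>n(k) + h\<^sub>n(k+d))/2\<close>, and
  \<open>P\<^sub>d = q = lim h\<^sub>n(1)\<close>. Descending \<open>k\<^sub>1 + k\<^sub>2\<close> levels means descending \<open>k\<^sub>1\<close> and then
  \<open>k\<^sub>2\<close> levels, so \<open>h\<close> is supermultiplicative, and the first step yields \<open>q \<ge> (1 + q\<^sup>d)/2\<close>.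
  Conversely \<open>h\<^sub>n(k) \<le> r\<^sup>k\<close> for every root \<open>r \<ge> 0\<close> of \<open>2r = 1 + r\<^sup>d\<close>. So \<open>q\<close> is the least
  nonnegative root of \<open>x\<^sup>d - 2x + 1 = (x - 1)(1 + x + \<dots> + x\<^sup>d\<^sup>-\<^sup>1 - 2)\<close>: it is 1 for
  \<open>d \<le> 2\<close>, and for \<open>d > 2\<close> the root \<open>r \<in> (1/2, 1)\<close> of the increasing second factor.
  Any root \<open>z\<close> in the unit disc has \<open>|z| \<le> r\<close>, and then
  \<open>2|z - r| = |z\<^sup>d - r\<^sup>d| \<le> d r\<^sup>d\<^sup>-\<^sup>1 |z - r|\<close> with \<open>d r\<^sup>d\<^sup>-\<^sup>1 < 2\<close> forces \<open>z = r\<close>.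
\<close>

fun walk_hits_zero :: "nat \<Rightarrow> nat \<Rightarrow> nat \<Rightarrow> (nat \<Rightarrow> nat) \<Rightarrow> bool" where
  "walk_hits_zero d n 0 x = True"
| "walk_hits_zero d 0 (Suc k) x = False"
| "walk_hits_zero d (Suc n) (Suc k) x =
     walk_hits_zero d n (if x 0 = 0 then k else k + d) (\<lambda>i. x (Suc i))"

lemma walk_hits_zero_Suc: "walk_hits_zero d n k x \<Longrightarrow> walk_hits_zero d (Suc n) k x"
  by (induction d n k x rule: walk_hits_zero.induct) auto

lemma walk_hits_zero_iff:
  assumes "\<And>i. x i \<in> {0, 1}"
  shows "walk_hits_zero d n k x \<longleftrightarrow> (\<exists>N\<le>n. d * (\<Sum>i<N. x i) + k \<le> N)"
  using assms
proof (induction n arbitrary: k x)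
  case 0
  then show ?case by (cases k) auto
next
  case (Suc n)
  show ?case
  proof (cases k)
    case (Suc k')
    have shift: "(\<exists>N\<le>Suc n. P N) \<longleftrightarrow> (\<exists>N\<le>n. P (Suc N))" if "\<not> P 0" for P
      using that by (metis Suc_le_mono not0_implies_Suc)
    have sum_shift: "(\<Sum>i<Suc N. x i) = x 0 + (\<Sum>i<N. x (Suc i))" for N
      by (subst sum.lessThan_Suc_shift) simp
    have ex: "(\<exists>N\<le>Suc n. d * (\<Sum>i<N. x i) + k \<le> N) \<longleftrightarrow>
        (\<exists>N\<le>n. d * (x 0 + (\<Sum>i<N. x (Suc i))) + k \<le> Suc N)"
      using shift[of "\<lambda>N. d * (\<Sum>i<N. x i) + k \<le> N"] Suc by (simp only: sum_shift)
    have tail: "\<And>i. x (Suc i) \<in> {0, 1}"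
      using Suc.prems by blast
    from Suc.prems[of 0] consider "x 0 = 0" | "x 0 = 1"
      by auto
    then show ?thesis
      using ex Suc.IH[OF tail] \<open>k = Suc k'\<close> by cases (simp_all add: algebra_simps)
  qed auto
qed

lemma ruin_condition_iff:
  assumes "0 < d"
  shows "(0 < N \<and> real S < real N / real d) \<longleftrightarrow> d * S + 1 \<le> N"
proof -
  have "real S < real N / real d \<longleftrightarrow> d * S < N"
    using assms by (simp add: pos_less_divide_eq mult.commute flip: of_nat_mult)
  then show ?thesis
    by auto
qed

fun hit_prob :: "nat \<Rightarrow> nat \<Rightarrow> nat \<Rightarrow> real" where
  "hit_prob d n 0 = 1"
| "hit_prob d 0 (Suc k) = 0"
| "hit_prob d (Suc n) (Suc k) = (hit_prob d n k + hit_prob d n (k + d)) / 2"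

lemma hit_prob_nonneg: "0 \<le> hit_prob d n k"
  by (induction d n k rule: hit_prob.induct) auto

lemma hit_prob_le_1: "hit_prob d n k \<le> 1"
  by (induction d n k rule: hit_prob.induct) auto

lemma hit_prob_mono_Suc: "hit_prob d n k \<le> hit_prob d (Suc n) k"
  by (induction d n k rule: hit_prob.induct)
    (auto simp: hit_prob_nonneg intro: add_mono divide_right_mono)

lemma incseq_hit_prob: "incseq (\<lambda>n. hit_prob d n k)"
  by (rule incseq_SucI) (rule hit_prob_mono_Suc)

lemma hit_prob_supermult:
  "hit_prob d n1 k1 * hit_prob d n2 k2 \<le> hit_prob d (n1 + n2) (k1 + k2)"
proof (induction n1 arbitrary: k1)
  case 0
  then show ?case by (cases k1) (auto simp: hit_prob_nonneg)
next
  case (Suc n1)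
  show ?case
  proof (cases k1)
    case 0
    then show ?thesis
      using incseq_hit_prob[of d k2] by (simp add: hit_prob_le_1 incseq_def)
  next
    case (Suc k)
    have "hit_prob d (Suc n1) k1 * hit_prob d n2 k2 =
        (hit_prob d n1 k * hit_prob d n2 k2 + hit_prob d n1 (k + d) * hit_prob d n2 k2) / 2"
      using Suc by (simp add: field_simps)
    also have "\<dots> \<le> (hit_prob d (n1 + n2) (k + k2) + hit_prob d (n1 + n2) (k + d + k2)) / 2"
      using Suc.IH[of k] Suc.IH[of "k + d"] by simp
    also have "\<dots> = hit_prob d (Suc n1 + n2) (k1 + k2)"
      using Suc by (simp add: ac_simps)
    finally show ?thesis .
  qed
qed

lemma hit_prob_power_le: "hit_prob d n 1 ^ j \<le> hit_prob d (j * n) j"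
proof (induction j)
  case (Suc j)
  have "hit_prob d n 1 ^ Suc j \<le> hit_prob d n 1 * hit_prob d (j * n) j"
    using Suc hit_prob_nonneg by (simp add: mult_left_mono)
  also have "\<dots> \<le> hit_prob d (n + j * n) (1 + j)"
    by (rule hit_prob_supermult)
  finally show ?case by simp
qed simp

lemma hit_prob_le_root_power:
  assumes "0 \<le> r" "2 * r = 1 + r ^ d"
  shows "hit_prob d n k \<le> r ^ k"
proof (induction n arbitrary: k)
  case 0
  then show ?case using assms by (cases k) auto
next
  case (Suc n)
  show ?case
  proof (cases k)
    case (Suc k')
    have "hit_prob d (Suc n) k \<le> (r ^ k' + r ^ (k' + d)) / 2"
      using Suc Suc.IH[of k'] Suc.IH[of "k' + d"] by auto
    also have "\<dots> = r ^ k' * ((1 + r ^ d) / 2)"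
      by (simp add: power_add field_simps)
    also have "(1 + r ^ d) / 2 = r"
      using assms(2) by simp
    finally show ?thesis
      using Suc by (simp add: mult.commute)
  qed simp
qed

lemma hit_prob_limit_super_solution:
  assumes "(\<lambda>n. hit_prob d n 1) \<longlonglongrightarrow> q"
  shows "1 + q ^ d \<le> 2 * q"
proof -
  have "(1 + hit_prob d n 1 ^ d) / 2 \<le> hit_prob d (Suc (d * n)) 1" for n
    using hit_prob_power_le[of d n d] by simp
  also have "hit_prob d m 1 \<le> q" for m
    using incseq_hit_prob assms by (rule incseq_le)
  finally have "(1 + hit_prob d n 1 ^ d) / 2 \<le> q" for n .
  moreover have "(\<lambda>n. (1 + hit_prob d n 1 ^ d) / 2) \<longlonglongrightarrow> (1 + q ^ d) / 2"
    by (intro tendsto_intros assms) simp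
  ultimately have "(1 + q ^ d) / 2 \<le> q"
    by (intro LIMSEQ_le_const2) auto
  then show ?thesis
    by simp
qed

lemma hit_prob_limit_le_root:
  assumes "(\<lambda>n. hit_prob d n 1) \<longlonglongrightarrow> q" "0 \<le> r" "2 * r = 1 + r ^ d"
  shows "q \<le> r"
proof -
  have "hit_prob d n 1 \<le> r" for n
    using hit_prob_le_root_power[OF assms(2,3), of n 1] by simp
  then show ?thesis
    by (intro LIMSEQ_le_const2[OF assms(1)]) auto
qed

definition deflated_poly :: "nat \<Rightarrow> real \<Rightarrow> real" where
  "deflated_poly d x = (\<Sum>i<d. x ^ i) - 2"

lemma ruin_poly_factor: "x ^ d - 2 * x + 1 = (x - 1) * deflated_poly d x"
  unfolding deflated_poly_def using power_diff_1_eq[of x d] by (simp add: algebra_simps)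

lemma deflated_poly_strict_mono:
  assumes "0 \<le> x" "x < y" "2 \<le> d"
  shows "deflated_poly d x < deflated_poly d y"
proof -
  have "(\<Sum>i<d. x ^ i) < (\<Sum>i<d. y ^ i)"
  proof (rule sum_strict_mono_ex1)
    show "\<forall>i\<in>{..<d}. x ^ i \<le> y ^ i"
      using assms by (auto intro: power_mono)
    show "\<exists>i\<in>{..<d}. x ^ i < y ^ i"
      using assms by (intro bexI[of _ 1]) auto
  qed simp
  then show ?thesis
    unfolding deflated_poly_def by simp
qed

lemma deflated_poly_root_exists:
  assumes "2 < d"
  obtains r where "1/2 < r" "r < 1" "deflated_poly d r = 0"
proof -
  have neg: "deflated_poly d (1/2) < 0"
    using ruin_poly_factor[of "1/2" d] zero_less_power[of "1/2::real" d] by simp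
  have pos: "0 < deflated_poly d 1"
    using assms by (simp add: deflated_poly_def)
  have "continuous_on {1/2..1} (deflated_poly d)"
    unfolding deflated_poly_def by (intro continuous_intros)
  then obtain r where "1/2 \<le> r" "r \<le> 1" "deflated_poly d r = 0"
    using IVT'[of "deflated_poly d" "1/2" 0 1] neg pos by force
  moreover have "r \<noteq> 1/2" "r \<noteq> 1"
    using neg pos \<open>deflated_poly d r = 0\<close> by force+
  ultimately show ?thesis
    using that by force
qed

lemma deflated_poly_root_power_bound:
  assumes "2 \<le> d" "0 < r" "r < 1" "deflated_poly d r = 0"
  shows "real d * r ^ (d - 1) < 2"
proof -
  have "(\<Sum>i<d. r ^ (d - 1)) < (\<Sum>i<d. r ^ i)"
  proof (rule sum_strict_mono_ex1)
    show "\<forall>i\<in>{..<d}. r ^ (d - 1) \<le> r ^ i"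
      using assms by (auto intro: power_decreasing)
    show "\<exists>i\<in>{..<d}. r ^ (d - 1) < r ^ i"
      using assms by (intro bexI[of _ 0]) (auto intro: power_less_one_iff[THEN iffD2])
  qed simp
  then show ?thesis
    using assms(4) by (simp add: deflated_poly_def)
qed

lemma super_solution_eq_1:
  fixes q :: real
  assumes "d \<in> {1, 2}" "q \<le> 1" "1 + q ^ d \<le> 2 * q"
  shows "q = 1"
proof -
  have "(q - 1) ^ 2 = 1 + q ^ 2 - 2 * q"
    by (simp add: power2_eq_square algebra_simps)
  moreover have "0 \<le> (q - 1) ^ 2"
    by simp
  ultimately have "(q - 1) ^ 2 = 0" if "d = 2"
    using assms(3) unfolding that by linarith
  then show ?thesis
    using assms by auto
qed

lemma super_solution_below_root_eq_root:
  assumes "2 \<le> d" "0 \<le> q" "1 + q ^ d \<le> 2 * q"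
    and "q \<le> r" "r < 1" "deflated_poly d r = 0"
  shows "q = r"
proof (rule ccontr)
  assume "q \<noteq> r"
  then have "deflated_poly d q < 0"
    using assms deflated_poly_strict_mono[of q r d] by simp
  then have "0 < q ^ d - 2 * q + 1"
    using assms(4,5) ruin_poly_factor[of q d] by (simp add: mult_neg_neg)
  then show False
    using assms(3) by simp
qed

lemma hit_prob_limit_eq_1:
  assumes "(\<lambda>n. hit_prob d n 1) \<longlonglongrightarrow> q" "d \<in> {1, 2}"
  shows "q = 1"
proof (rule super_solution_eq_1)
  show "q \<le> 1"
    using hit_prob_le_1 by (intro LIMSEQ_le_const2[OF assms(1)]) auto
  show "1 + q ^ d \<le> 2 * q"
    using assms(1) by (rule hit_prob_limit_super_solution)
qed (rule assms(2))

lemma hit_prob_limit_eq_root: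
  assumes "(\<lambda>n. hit_prob d n 1) \<longlonglongrightarrow> q"
    and "2 \<le> d" "0 \<le> r" "r < 1" "deflated_poly d r = 0"
  shows "q = r"
proof (rule super_solution_below_root_eq_root)
  show "0 \<le> q"
    using hit_prob_nonneg by (intro LIMSEQ_le_const[OF assms(1)]) auto
  show "1 + q ^ d \<le> 2 * q"
    using assms(1) by (rule hit_prob_limit_super_solution)
  have "2 * r = 1 + r ^ d"
    using ruin_poly_factor[of r d] assms(5) by simp
  then show "q \<le> r"
    by (rule hit_prob_limit_le_root[OF assms(1,3)])
qed (rule assms)+

lemma ruin_root_norm_le:
  fixes z :: complex
  assumes "2 \<le> d" "cmod z < 1" "z ^ d - 2 * z + 1 = 0"
    and "0 \<le> r" "deflated_poly d r = 0"
  shows "cmod z \<le> r"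
proof (rule ccontr)
  assume "\<not> cmod z \<le> r"
  then have "deflated_poly d r < deflated_poly d (cmod z)"
    using assms by (intro deflated_poly_strict_mono) auto
  then have "cmod z ^ d - 2 * cmod z + 1 < 0"
    using assms(2,5) ruin_poly_factor[of "cmod z" d] by (simp add: mult_neg_pos)
  moreover have "2 * cmod z \<le> 1 + cmod z ^ d"
  proof -
    have "2 * z = 1 + z ^ d"
      using assms(3) by (simp add: algebra_simps)
    then have "2 * cmod z = cmod (1 + z ^ d)"
      by (metis norm_mult norm_numeral)
    also have "\<dots> \<le> 1 + cmod z ^ d"
      using norm_triangle_ineq[of 1 "z ^ d"] by (simp add: norm_power)
    finally show ?thesis .
  qed
  ultimately show False
    by simp
qed

lemma ruin_roots_in_unit_disc:
  assumes "2 \<le> d" "0 < r" "r < 1" "deflated_poly d r = 0"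
  shows "{z::complex. cmod z < 1 \<and> z ^ d - 2 * z + 1 = 0} = {complex_of_real r}"
proof -
  define R where "R = complex_of_real r"
  have "r ^ d = 2 * r - 1"
    using ruin_poly_factor[of r d] assms(4) by simp
  then have R_pow: "R ^ d = 2 * R - 1"
    unfolding R_def by (simp only: of_real_power[symmetric]) simp
  have "z = R" if z: "cmod z < 1" "z ^ d - 2 * z + 1 = 0" for z
  proof -
    have z_le_r: "cmod z \<le> r"
      using ruin_root_norm_le[OF assms(1) z] assms by simp
    define S where "S = (\<Sum>i<d. R ^ (d - Suc i) * z ^ i)"
    have z_pow: "z ^ d = 2 * z - 1"
      using z(2) by (simp add: algebra_simps)
    have "2 * (z - R) = z ^ d - R ^ d"
      by (simp add: R_pow z_pow algebra_simps)
    also have "\<dots> = (z - R) * S"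
      unfolding S_def by (rule power_diff_sumr2)
    finally have "cmod (z - R) * 2 = cmod (z - R) * cmod S"
      by (metis mult.commute norm_mult norm_numeral)
    moreover have "cmod S < 2"
    proof -
      have "cmod S \<le> (\<Sum>i<d. r ^ (d - Suc i) * cmod z ^ i)"
        unfolding S_def R_def using assms(2)
        by (auto simp: norm_mult norm_power intro!: order_trans[OF norm_sum] sum_mono)
      also have "\<dots> \<le> (\<Sum>i<d. r ^ (d - Suc i) * r ^ i)"
        using z_le_r assms(2) by (intro sum_mono mult_left_mono power_mono) auto
      also have "\<dots> = real d * r ^ (d - 1)"
        by (simp add: power_add[symmetric])
      also have "\<dots> < 2"
        using deflated_poly_root_power_bound assms by blast
      finally show ?thesis .
    qed
    ultimately have "cmod (z - R) = 0"
      by (metis mult_left_cancel less_irrefl)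
    then show "z = R"
      by simp
  qed
  moreover have "cmod R < 1" "R ^ d - 2 * R + 1 = 0"
    using assms(2,3) R_pow by (simp_all add: R_def)
  ultimately show ?thesis
    unfolding R_def[symmetric] by blast
qed

definition var_events :: "'a measure \<Rightarrow> (nat \<Rightarrow> 'a \<Rightarrow> 'b) \<Rightarrow> nat \<Rightarrow> 'a set set" where
  "var_events M X i = range (\<lambda>A. X i -` A \<inter> space M)"

lemma var_events_subset_Pow: "var_events M X i \<subseteq> Pow (space M)"
  unfolding var_events_def by auto

lemma Int_stable_var_events: "Int_stable (var_events M X i)"
proof (rule Int_stableI)
  fix a b
  assume "a \<in> var_events M X i" "b \<in> var_events M X i"
  then obtain A B where "a = X i -` A \<inter> space M" "b = X i -` B \<inter> space M"
    unfolding var_events_def by blast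
  then have "a \<inter> b = X i -` (A \<inter> B) \<inter> space M"
    by blast
  then show "a \<inter> b \<in> var_events M X i"
    unfolding var_events_def by blast
qed

lemma (in prob_space) indep_vars_count_space_iff:
  "indep_vars (\<lambda>_. count_space UNIV) X I \<longleftrightarrow>
    (\<forall>i\<in>I. random_variable (count_space UNIV) (X i)) \<and> indep_sets (var_events M X) I"
proof -
  have "{X i -` A \<inter> space M | A. A \<in> sets (count_space UNIV)} = var_events M X i" for i
    unfolding var_events_def by auto
  then show ?thesis
    unfolding indep_vars_def2 by simp
qed

locale fair_coin_flips = prob_space +
  fixes X :: "nat \<Rightarrow> 'a \<Rightarrow> nat"
  assumes indep: "indep_vars (\<lambda>_. count_space UNIV) X UNIV"
    and coin_values: "\<And>k. \<forall>\<omega>\<in>space M. X k \<omega> \<in> {0, 1}"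
    and prob_zero: "\<And>k. prob {\<omega>\<in>space M. X k \<omega> = 0} = 1/2"
    and prob_one: "\<And>k. prob {\<omega>\<in>space M. X k \<omega> = 1} = 1/2"
begin

definition future_events :: "nat \<Rightarrow> 'a set set" where
  "future_events m = sigma_sets (space M) (\<Union>i\<in>{m..}. var_events M X i)"

lemma sigma_algebra_future_events: "sigma_algebra (space M) (future_events m)"
  unfolding future_events_def using var_events_subset_Pow
  by (intro sigma_algebra_sigma_sets) blast

lemma future_events_antimono: "m \<le> m' \<Longrightarrow> future_events m' \<subseteq> future_events m"
  unfolding future_events_def by (intro sigma_sets_subseteq UN_mono) auto

lemma vimage_in_future_events: "m \<le> i \<Longrightarrow> X i -` A \<inter> space M \<in> future_events m"
  unfolding future_events_def var_events_def by (intro sigma_sets.Basic) auto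

lemma random_variable_X: "random_variable (count_space UNIV) (X i)"
  using indep by (simp add: indep_vars_count_space_iff)

lemma future_events_subset_events: "future_events m \<subseteq> events"
proof -
  have "var_events M X i \<subseteq> events" for i
    unfolding var_events_def using random_variable_X by (auto intro: measurable_sets)
  then show ?thesis
    unfolding future_events_def by (intro sets.sigma_sets_subset) auto
qed

lemma walk_hits_zero_future_event:
  "{\<omega>\<in>space M. walk_hits_zero d n k (\<lambda>i. X (i + m) \<omega>)} \<in> future_events m"
proof (induction n arbitrary: k m)
  case 0
  interpret F: sigma_algebra "space M" "future_events m"
    by (rule sigma_algebra_future_events)
  show ?case
    by (cases k) simp_all
next
  case (Suc n)
  interpret F: sigma_algebra "space M" "future_events m"
    by (rule sigma_algebra_future_events)
  show ?case
  proof (cases k)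
    case (Suc k')
    let ?A = "X m -` {0} \<inter> space M"
    let ?S = "\<lambda>j. {\<omega>\<in>space M. walk_hits_zero d n j (\<lambda>i. X (i + Suc m) \<omega>)}"
    have split: "{\<omega>\<in>space M. walk_hits_zero d (Suc n) k (\<lambda>i. X (i + m) \<omega>)} =
        (?A \<inter> ?S k') \<union> ((space M - ?A) \<inter> ?S (k' + d))"
      using Suc by auto
    have S: "?S j \<in> future_events m" for j
      by (rule subsetD[OF future_events_antimono Suc.IH]) simp
    have A: "?A \<in> future_events m"
      by (rule vimage_in_future_events) simp
    show ?thesis
      unfolding split by (intro F.Un F.Int F.Diff F.top A S)
  qed simp
qed

lemma indep_present_future:
  "indep_set (sigma_sets (space M) (var_events M X m)) (future_events (Suc m))"
proof -
  let ?I = "case_bool {m} {Suc m..}"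
  have "indep_sets (var_events M X) UNIV"
    using indep by (simp add: indep_vars_count_space_iff)
  from indep_sets_mono_index[OF _ this] have "indep_sets (var_events M X) (\<Union>b. ?I b)"
    by simp
  then have "indep_sets (\<lambda>b. sigma_sets (space M) (\<Union>i\<in>?I b. var_events M X i)) UNIV"
    by (intro indep_sets_collect_sigma Int_stable_var_events)
      (auto simp: disjoint_family_on_def split: bool.split)
  also have "(\<lambda>b. sigma_sets (space M) (\<Union>i\<in>?I b. var_events M X i)) =
      case_bool (sigma_sets (space M) (var_events M X m)) (future_events (Suc m))"
    by (rule ext) (simp add: future_events_def split: bool.split)
  finally show ?thesis
    unfolding indep_set_def .
qed

lemma prob_walk_hits_zero:
  "prob {\<omega>\<in>space M. walk_hits_zero d n k (\<lambda>i. X (i + m) \<omega>)} = hit_prob d n k"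
proof (induction n arbitrary: k m)
  case 0
  then show ?case by (cases k) (simp_all add: prob_space)
next
  case (Suc n)
  show ?case
  proof (cases k)
    case (Suc k')
    let ?A = "\<lambda>b. X m -` {b} \<inter> space M"
    let ?S = "\<lambda>j. {\<omega>\<in>space M. walk_hits_zero d n j (\<lambda>i. X (i + Suc m) \<omega>)}"
    have present: "?A b \<in> sigma_sets (space M) (var_events M X m)" for b
      unfolding var_events_def by (intro sigma_sets.Basic) auto
    have future: "?S j \<in> future_events (Suc m)" for j
      by (rule walk_hits_zero_future_event)
    have events: "?A b \<inter> ?S j \<in> events" for b j
      using future_events_subset_events future random_variable_X
      by (intro sets.Int measurable_sets) auto
    have split: "{\<omega>\<in>space M. walk_hits_zero d (Suc n) k (\<lambda>i. X (i + m) \<omega>)} =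
        (?A 0 \<inter> ?S k') \<union> (?A 1 \<inter> ?S (k' + d))"
      using Suc coin_values[of m] by auto
    have "prob {\<omega>\<in>space M. walk_hits_zero d (Suc n) k (\<lambda>i. X (i + m) \<omega>)} =
        prob (?A 0 \<inter> ?S k') + prob (?A 1 \<inter> ?S (k' + d))"
      unfolding split by (rule finite_measure_Union[OF events events]) auto
    also have "\<dots> = prob (?A 0) * prob (?S k') + prob (?A 1) * prob (?S (k' + d))"
      using indep_setD[OF indep_present_future present future] by simp
    also have "\<dots> = hit_prob d (Suc n) k"
    proof -
      have "?A b = {\<omega>\<in>space M. X m \<omega> = b}" for b
        by blast
      then have "prob (?A 0) = 1/2" "prob (?A 1) = 1/2"
        using prob_zero prob_one by simp_all
      then show ?thesis
        using Suc Suc.IH[of k' "Suc m"] Suc.IH[of "k' + d" "Suc m"] by (simp only:) simp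
    qed
    finally show ?thesis .
  qed (simp add: prob_space)
qed

lemma ruin_event_eq_Union:
  assumes "0 < d"
  shows "ruin_event M X d = (\<Union>n. {\<omega>\<in>space M. walk_hits_zero d n 1 (\<lambda>i. X i \<omega>)})"
proof -
  have "(\<exists>n. walk_hits_zero d n 1 (\<lambda>i. X i \<omega>)) \<longleftrightarrow>
      (\<exists>N>0. real (\<Sum>k<N. X k \<omega>) < real N / real d)" if "\<omega> \<in> space M" for \<omega>
  proof -
    have "(\<exists>n. walk_hits_zero d n 1 (\<lambda>i. X i \<omega>)) \<longleftrightarrow> (\<exists>N. d * (\<Sum>k<N. X k \<omega>) + 1 \<le> N)"
      using that coin_values walk_hits_zero_iff[of "\<lambda>i. X i \<omega>" d _ 1] by blast
    then show ?thesis
      by (simp only: ruin_condition_iff[OF assms])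
  qed
  then show ?thesis
    unfolding ruin_event_def by auto
qed

lemma hit_prob_tendsto_ruin_prob:
  assumes "0 < d"
  shows "(\<lambda>n. hit_prob d n 1) \<longlonglongrightarrow> prob (ruin_event M X d)"
proof -
  let ?H = "\<lambda>n. {\<omega>\<in>space M. walk_hits_zero d n 1 (\<lambda>i. X (i + 0) \<omega>)}"
  have "range ?H \<subseteq> events"
    using walk_hits_zero_future_event future_events_subset_events by blast
  moreover have "incseq ?H"
    by (rule incseq_SucI) (blast intro: walk_hits_zero_Suc)
  ultimately have "(\<lambda>n. prob (?H n)) \<longlonglongrightarrow> prob (\<Union>n. ?H n)"
    by (rule finite_Lim_measure_incseq)
  then show ?thesis
    using prob_walk_hits_zero[of d _ 1 0] ruin_event_eq_Union[OF assms] by simp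
qed

end

theorem mainTheorem5:
  fixes M :: "'a measure" and X :: "nat \<Rightarrow> 'a \<Rightarrow> nat" and d :: nat
  assumes "prob_space M"
    and "prob_space.indep_vars M (\<lambda>_. count_space UNIV) X UNIV"
    and "\<And>k. \<forall>\<omega>\<in>space M. X k \<omega> \<in> {0, 1}"
    and "\<And>k. measure M {\<omega> \<in> space M. X k \<omega> = 0} = 1/2"
    and "\<And>k. measure M {\<omega> \<in> space M. X k \<omega> = 1} = 1/2"
    and "d \<ge> 1"
  shows "(d \<le> 2 \<longrightarrow> measure M (ruin_event M X d) = 1) \<and>
         (d > 2 \<longrightarrow> (\<exists>r::real. 1/2 < r \<and> r < 1 \<and>
             {z::complex. cmod z < 1 \<and> z ^ d - 2 * z + 1 = 0} = {complex_of_real r} \<and>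
             measure M (ruin_event M X d) = r))"
proof -
  interpret fair_coin_flips M X
    using assms by (simp add: fair_coin_flips_def fair_coin_flips_axioms_def)
  have lim: "(\<lambda>n. hit_prob d n 1) \<longlonglongrightarrow> prob (ruin_event M X d)"
    using assms(6) by (intro hit_prob_tendsto_ruin_prob) simp
  show ?thesis
  proof (intro conjI impI)
    assume "d \<le> 2"
    with assms(6) have "d \<in> {1, 2}"
      by auto
    with lim show "prob (ruin_event M X d) = 1"
      by (rule hit_prob_limit_eq_1)
  next
    assume "2 < d"
    then obtain r where r: "1/2 < r" "r < 1" "deflated_poly d r = 0"
      using deflated_poly_root_exists by blast
    have "prob (ruin_event M X d) = r"
      using \<open>2 < d\<close> r(1) by (intro hit_prob_limit_eq_root[OF lim _ _ r(2,3)]) auto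
    moreover have "{z::complex. cmod z < 1 \<and> z ^ d - 2 * z + 1 = 0} = {complex_of_real r}"
      using \<open>2 < d\<close> r by (intro ruin_roots_in_unit_disc) simp_all
    ultimately show "\<exists>r. 1/2 < r \<and> r < 1 \<and>
        {z::complex. cmod z < 1 \<and> z ^ d - 2 * z + 1 = 0} = {complex_of_real r} \<and>
        prob (ruin_event M X d) = r"
      using r(1,2) by (intro exI[of _ r]) simp
  qed
qed

end
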